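(* Let $f:\mathbb{R}^n\to\mathbb{R}^n$ be continuous, $\Gamma\in\mathbb{R}^{n\times n}$, and let $s(t)$ be a solution of $\dot s(t)=f(s(t))$. Let $L=(l_{ij})\in\mathbb{R}^{m\times m}$ be irreducible with $\mathrm{Rank}(L)=m-1$, $l_{ij}\ge 0$ for $i\ne j$ and $\sum_{j=1}^m l_{ij}=0$ for every $i$, and let $\varepsilon>0$. Consider the pinning-controlled system $$\frac{dx_1(t)}{dt}=f(x_1(t))+c\sum_{j=1}^m l_{1j}\Gamma x_j(t)-c\varepsilon(x_1(t)-s(t)),$$ $$\frac{dx_i(t)}{dt}=f(x_i(t))+c\sum_{j=1}^m l_{ij}\Gamma x_j(t),\qquad i=2,\dots,m.$$ Suppose there exist a positive definite $P\in\mathbb{R}^{n\times n}$, $\Delta\in\mathbb{R}^{n\times n}$ and $\epsilon>0$ with $$(x-y)^T P\big\{[f(x)-f(y)]-\Delta(x-y)\big\}\le -\epsilon (x-y)^T(x-y)\quad\text{for all }x,y\in\mathbb{R}^n,$$ that $\mathrm{Ran}(P\Delta)=\mathrm{Ran}(P\Gamma)$ (in particular if $\Delta=\Gamma$), and that $P\Gamma=BB^T$ for some matrix $B$ with $P\Gamma$ positive definite on $\mathrm{Ran}(P\Gamma)$. Then, if the coupling strength $c$ is large enough, $x_i(t)-s(t)\to 0$ as $t\to\infty$ for all $i=1,\dots,m$.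
   Context: $\mathrm{Ran}(M)$ is the range of $M$; "positive definite on $\mathrm{Ran}(P\Gamma)$" means $u^TP\Gamma u>0$ for all nonzero $u\in\mathrm{Ran}(P\Gamma)$. *)

theory Defs
  imports "HOL-Analysis.Analysis"
begin

text \<open>A square matrix is irreducible iff it is not reducible, i.e. there is no
nonempty proper index set I with l_ij = 0 for all i in I and j not in I
(equivalently, it cannot be permuted to block upper-triangular form).\<close>
definition irreducible_matrix :: "real^'m^'m \<Rightarrow> bool" where
  "irreducible_matrix L \<longleftrightarrow>
     \<not> (\<exists>I. I \<noteq> {} \<and> I \<noteq> UNIV \<and> (\<forall>i\<in>I. \<forall>j. j \<notin> I \<longrightarrow> L $ i $ j = 0))"

definition pos_def_matrix :: "real^'n^'n \<Rightarrow> bool" where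
  "pos_def_matrix P \<longleftrightarrow> transpose P = P \<and> (\<forall>x. x \<noteq> 0 \<longrightarrow> x \<bullet> (P *v x) > 0)"

definition Ran :: "real^'n^'m \<Rightarrow> (real^'m) set" where
  "Ran M = range (\<lambda>x. M *v x)"

end

(*
  The Lyapunov function is V = sum_i xi_i e_i^T P e_i, where e_i = x_i - s and xi is the positive
  left null vector of L given by irreducibility (Perron-Frobenius for the Metzler matrix L).
  Along the error dynamics, the QUAD condition yields dissipation -eps |e_i|^2 except for the term
  e_i^T P Delta e_i; since Ran(P Delta) = Ran(B B^T), that term is bounded by |B^T e_i| |e_i|, and
  Young's inequality leaves only a multiple R |B^T e_i|^2. The coupling together with the pinning
  contributes -c times a quadratic form in the B^T e_i which, by irreducibility and because one
  node is pinned, is coercive. For c large it swallows the R-terms, so V' <= -alpha V and all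
  errors decay exponentially.
*)
theory Submission
  imports Defs
begin

lemma homogeneous_pos_lower_bound:
  fixes q :: "'a::euclidean_space \<Rightarrow> real"
  assumes cont: "continuous_on UNIV q"
    and hom: "\<And>x r. q (r *\<^sub>R x) = r\<^sup>2 * q x"
    and pos: "\<And>x. x \<noteq> 0 \<Longrightarrow> q x > 0"
  shows "\<exists>k>0. \<forall>x. k * (norm x)\<^sup>2 \<le> q x"
proof -
  obtain b :: 'a where "b \<in> Basis" using nonempty_Basis by blast
  then have "sphere (0::'a) 1 \<noteq> {}" by (auto intro!: exI[of _ b])
  then obtain x0 where x0: "x0 \<in> sphere 0 1" and min: "\<And>y. y \<in> sphere 0 1 \<Longrightarrow> q x0 \<le> q y"
    using continuous_attains_inf[OF compact_sphere _ continuous_on_subset[OF cont]] by blast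
  have "x0 \<noteq> 0" using x0 by auto
  then have "q x0 > 0" by (rule pos)
  moreover have "q x0 * (norm x)\<^sup>2 \<le> q x" for x
  proof (cases "x = 0")
    case True
    then show ?thesis using hom[of 0 0] by simp
  next
    case False
    have "q x0 \<le> q ((1 / norm x) *\<^sub>R x)" using min False by auto
    also have "\<dots> = q x / (norm x)\<^sup>2" using hom[of "1 / norm x" x] by (simp add: power_divide)
    finally show ?thesis using False by (simp add: field_simps)
  qed
  ultimately show ?thesis by blast
qed

lemma pos_def_matrix_lower_bound:
  assumes "pos_def_matrix P"
  shows "\<exists>k>0. \<forall>x. k * (norm x)\<^sup>2 \<le> x \<bullet> (P *v x)"
proof (rule homogeneous_pos_lower_bound)
  show "continuous_on UNIV (\<lambda>x. x \<bullet> (P *v x))"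
    by (intro continuous_on_inner continuous_on_id linear_continuous_on matrix_vector_mul_bounded_linear)
  show "(r *\<^sub>R x) \<bullet> (P *v (r *\<^sub>R x)) = r\<^sup>2 * (x \<bullet> (P *v x))" for r x
    by (simp add: matrix_vector_mult_scaleR power2_eq_square)
  show "x \<noteq> 0 \<Longrightarrow> x \<bullet> (P *v x) > 0" for x
    using assms by (simp add: pos_def_matrix_def)
qed

lemma matrix_quadratic_form_upper_bound:
  fixes P :: "real^'n^'n"
  shows "\<exists>K>0. \<forall>x. x \<bullet> (P *v x) \<le> K * (norm x)\<^sup>2"
proof -
  obtain K where K: "K > 0" "\<And>x. norm (P *v x) \<le> K * norm x"
    using linear_bounded_pos[OF matrix_vector_mul_linear[of P]] by blast
  have "x \<bullet> (P *v x) \<le> K * (norm x)\<^sup>2" for x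
  proof -
    have "x \<bullet> (P *v x) \<le> norm x * norm (P *v x)" by (rule norm_cauchy_schwarz)
    also have "\<dots> \<le> norm x * (K * norm x)" by (rule mult_left_mono[OF K(2)]) simp
    finally show ?thesis by (simp add: power2_eq_square mult_ac)
  qed
  with K(1) show ?thesis by blast
qed

lemma symmetric_matrix_inner_commute:
  fixes P :: "real^'n^'n"
  assumes "transpose P = P"
  shows "a \<bullet> (P *v b) = b \<bullet> (P *v a)"
  by (metis assms dot_lmul_matrix inner_commute transpose_matrix_vector)

lemma inner_mult_transpose_factor:
  fixes B :: "real^'k^'n"
  shows "a \<bullet> ((B ** transpose B) *v b) = (transpose B *v a) \<bullet> (transpose B *v b)"
  by (simp add: matrix_vector_mul_assoc[symmetric] dot_lmul_matrix[symmetric])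

lemma Ran_subset_imp_matrix_factor:
  fixes A :: "real^'n^'m" and G :: "real^'k^'m"
  assumes "Ran A \<subseteq> Ran G"
  shows "\<exists>Z. A = G ** Z"
proof -
  have "\<forall>j. \<exists>z. A *v axis j 1 = G *v z"
    using assms unfolding Ran_def by blast
  then obtain z where z: "\<And>j. A *v axis j 1 = G *v z j" by metis
  have "A = G ** (\<chi> a j. z j $ a)"
  proof -
    have "A $ a $ j = (G ** (\<chi> a j. z j $ a)) $ a $ j" for a j
    proof -
      have "A $ a $ j = (G *v z j) $ a"
        using z[of j] by (simp add: matrix_vector_mult_basis column_def vec_eq_iff)
      then show ?thesis by (simp add: matrix_matrix_mult_def matrix_vector_mult_def)
    qed
    then show ?thesis by (simp add: vec_eq_iff)
  qed
  then show ?thesis ..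
qed

lemma inner_bound_by_factor:
  fixes A :: "real^'n^'n" and B :: "real^'k^'n"
  assumes "Ran A \<subseteq> Ran (B ** transpose B)"
  shows "\<exists>M\<ge>0. \<forall>x. x \<bullet> (A *v x) \<le> M * norm (transpose B *v x) * norm x"
proof -
  obtain Z where Z: "A = (B ** transpose B) ** Z"
    using Ran_subset_imp_matrix_factor[OF assms] by blast
  obtain M where M: "M > 0" "\<And>x. norm (transpose B *v (Z *v x)) \<le> M * norm x"
    using linear_bounded_pos[OF matrix_vector_mul_linear[of "transpose B ** Z"]]
    by (auto simp: matrix_vector_mul_assoc)
  have "x \<bullet> (A *v x) \<le> M * norm (transpose B *v x) * norm x" for x
  proof -
    have "x \<bullet> (A *v x) = x \<bullet> ((B ** transpose B) *v (Z *v x))"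
      by (simp add: Z matrix_vector_mul_assoc)
    also have "\<dots> = (transpose B *v x) \<bullet> (transpose B *v (Z *v x))"
      by (rule inner_mult_transpose_factor)
    also have "\<dots> \<le> norm (transpose B *v x) * norm (transpose B *v (Z *v x))"
      by (rule norm_cauchy_schwarz)
    also have "\<dots> \<le> norm (transpose B *v x) * (M * norm x)"
      by (rule mult_left_mono[OF M(2)]) simp
    finally show ?thesis by (simp add: mult_ac)
  qed
  with M(1) show ?thesis by (auto intro: less_imp_le)
qed

lemma quad_condition_factor_bound:
  fixes f :: "real^'n \<Rightarrow> real^'n" and B :: "real^'k^'n"
  assumes QUAD: "\<And>x y. (x - y) \<bullet> (P *v ((f x - f y) - \<Delta> *v (x - y))) \<le> - eps * ((x - y) \<bullet> (x - y))"
    and eps_pos: "eps > 0"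
    and ran: "Ran (P ** \<Delta>) \<subseteq> Ran (B ** transpose B)"
  shows "\<exists>R\<ge>0. \<forall>x y. (x - y) \<bullet> (P *v (f x - f y))
           \<le> - (eps / 2) * (norm (x - y))\<^sup>2 + R * (norm (transpose B *v (x - y)))\<^sup>2"
proof -
  obtain M where M: "M \<ge> 0" "\<And>e. e \<bullet> ((P ** \<Delta>) *v e) \<le> M * norm (transpose B *v e) * norm e"
    using inner_bound_by_factor[OF ran] by blast
  define R where "R = M\<^sup>2 / (2 * eps)"
  have young: "M * b * a - eps * a\<^sup>2 \<le> - (eps / 2) * a\<^sup>2 + R * b\<^sup>2" for a b :: real
  proof -
    have "0 \<le> (eps * a - M * b)\<^sup>2" by simp
    then have "2 * eps * (M * b * a - eps * a\<^sup>2) \<le> 2 * eps * (- (eps / 2) * a\<^sup>2 + R * b\<^sup>2)"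
      unfolding R_def using eps_pos by (simp add: power2_eq_square algebra_simps)
    then show ?thesis using eps_pos by simp
  qed
  have "(x - y) \<bullet> (P *v (f x - f y))
          \<le> - (eps / 2) * (norm (x - y))\<^sup>2 + R * (norm (transpose B *v (x - y)))\<^sup>2" for x y
  proof -
    have "(x - y) \<bullet> (P *v (f x - f y))
        \<le> (x - y) \<bullet> ((P ** \<Delta>) *v (x - y)) - eps * (norm (x - y))\<^sup>2"
      using QUAD[of x y]
      by (simp add: matrix_vector_mult_diff_distrib inner_diff_right matrix_vector_mul_assoc
          power2_norm_eq_inner)
    then show ?thesis
      using M(2)[of "x - y"] young[of "norm (transpose B *v (x - y))" "norm (x - y)"] by linarith
  qed
  moreover have "R \<ge> 0" unfolding R_def using eps_pos by simp
  ultimately show ?thesis by blast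
qed

lemma irreducible_laplacian_pos_left_kernel:
  fixes L :: "real^'m^'m"
  assumes L_irr: "irreducible_matrix L"
    and L_offdiag: "\<And>i j. i \<noteq> j \<Longrightarrow> L $ i $ j \<ge> 0"
    and L_rowsum: "\<And>i. (\<Sum>j\<in>UNIV. L $ i $ j) = 0"
  shows "\<exists>\<xi>. (\<forall>i. \<xi> i > 0) \<and> (\<forall>j. (\<Sum>i\<in>UNIV. \<xi> i * L $ i $ j) = 0)"
proof -
  have "L *v vec 1 = 0" "vec 1 \<noteq> (0::real^'m)"
    using L_rowsum by (simp_all add: vec_eq_iff matrix_vector_mult_def)
  then have "\<not> (\<exists>B. B ** L = mat 1)"
    using matrix_left_invertible_ker[of L] by blast
  then have "\<not> (\<exists>B. B ** transpose L = mat 1)"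
    by (metis matrix_left_right_inverse matrix_transpose_mul transpose_mat transpose_transpose)
  then obtain v where v: "v \<noteq> 0" "transpose L *v v = 0"
    using matrix_left_invertible_ker[of "transpose L"] by blast
  have col: "(\<Sum>i\<in>UNIV. v $ i * L $ i $ j) = 0" for j
    using v(2) by (simp add: vec_eq_iff matrix_vector_mult_def transpose_def mult.commute)
  (* Passing to |v| can only increase the column sums (off-diagonal entries are nonnegative);
     as they total zero, they all vanish, and irreducibility makes |v| positive. *)
  define a where "a i = \<bar>v $ i\<bar>" for i
  have col_ge: "(\<Sum>i\<in>UNIV. a i * L $ i $ j) \<ge> 0" for j
  proof -
    have "\<bar>v $ j * L $ j $ j\<bar> = \<bar>\<Sum>i\<in>UNIV-{j}. v $ i * L $ i $ j\<bar>"
      using col[of j] sum.remove[of UNIV j "\<lambda>i. v $ i * L $ i $ j"] by simp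
    also have "\<dots> \<le> (\<Sum>i\<in>UNIV-{j}. \<bar>v $ i * L $ i $ j\<bar>)" by (rule sum_abs)
    also have "\<dots> = (\<Sum>i\<in>UNIV-{j}. a i * L $ i $ j)"
      by (rule sum.cong) (auto simp: a_def abs_mult L_offdiag)
    finally have "a j * - L $ j $ j \<le> (\<Sum>i\<in>UNIV-{j}. a i * L $ i $ j)"
      using mult_left_mono[OF abs_ge_minus_self[of "L $ j $ j"], of "a j"]
      unfolding a_def by (simp add: abs_mult)
    then show ?thesis using sum.remove[of UNIV j "\<lambda>i. a i * L $ i $ j"] by simp
  qed
  have "(\<Sum>j\<in>UNIV. \<Sum>i\<in>UNIV. a i * L $ i $ j) = 0"
    by (subst sum.swap) (simp add: sum_distrib_left[symmetric] L_rowsum)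
  then have col_a: "(\<Sum>i\<in>UNIV. a i * L $ i $ j) = 0" for j
    using sum_nonneg_eq_0_iff[of UNIV "\<lambda>j. \<Sum>i\<in>UNIV. a i * L $ i $ j"] col_ge by auto
  define I where "I = {i. a i > 0}"
  have "I \<noteq> {}" using v(1) unfolding I_def a_def by (auto simp: vec_eq_iff)
  have "I = UNIV"
  proof (rule ccontr)
    assume "I \<noteq> UNIV"
    then obtain i j where ij: "i \<in> I" "j \<notin> I" "L $ i $ j \<noteq> 0"
      using L_irr \<open>I \<noteq> {}\<close> unfolding irreducible_matrix_def by blast
    then have "i \<noteq> j" "a j = 0" unfolding I_def a_def by auto
    have "a i * L $ i $ j \<le> (\<Sum>k\<in>UNIV-{j}. a k * L $ k $ j)"
      by (rule member_le_sum) (use \<open>i \<noteq> j\<close> L_offdiag in \<open>auto simp: a_def\<close>)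
    also have "\<dots> = 0"
      using col_a[of j] \<open>a j = 0\<close> sum.remove[of UNIV j "\<lambda>k. a k * L $ k $ j"] by simp
    finally show False
      using ij \<open>i \<noteq> j\<close> L_offdiag[of i j] unfolding I_def by (simp add: mult_le_0_iff)
  qed
  then show ?thesis using col_a unfolding I_def by blast
qed

lemma weighted_laplacian_inner_sum:
  fixes \<xi> :: "'m::finite \<Rightarrow> real" and L :: "real^'m^'m" and y :: "'m \<Rightarrow> 'a::real_inner"
  assumes rows: "\<And>i. (\<Sum>j\<in>UNIV. L $ i $ j) = 0"
    and cols: "\<And>j. (\<Sum>i\<in>UNIV. \<xi> i * L $ i $ j) = 0"
  shows "(\<Sum>i\<in>UNIV. \<Sum>j\<in>UNIV. \<xi> i * L $ i $ j * (y i \<bullet> y j))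
       = - (1/2) * (\<Sum>i\<in>UNIV. \<Sum>j\<in>UNIV. \<xi> i * L $ i $ j * (norm (y i - y j))\<^sup>2)"
proof -
  have diag_i: "(\<Sum>i\<in>UNIV. \<Sum>j\<in>UNIV. \<xi> i * L $ i $ j * (y i \<bullet> y i)) = 0"
    by (simp add: sum_distrib_right[symmetric] sum_distrib_left[symmetric] mult.assoc rows)
  have diag_j: "(\<Sum>i\<in>UNIV. \<Sum>j\<in>UNIV. \<xi> i * L $ i $ j * (y j \<bullet> y j)) = 0"
    by (subst sum.swap) (simp add: sum_distrib_right[symmetric] cols)
  have "\<xi> i * L $ i $ j * (norm (y i - y j))\<^sup>2 = \<xi> i * L $ i $ j * (y i \<bullet> y i)
      + \<xi> i * L $ i $ j * (y j \<bullet> y j) - 2 * (\<xi> i * L $ i $ j * (y i \<bullet> y j))" for i j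
    by (simp add: power2_norm_eq_inner inner_diff inner_commute algebra_simps)
  then have "(\<Sum>i\<in>UNIV. \<Sum>j\<in>UNIV. \<xi> i * L $ i $ j * (norm (y i - y j))\<^sup>2)
      = (\<Sum>i\<in>UNIV. \<Sum>j\<in>UNIV. \<xi> i * L $ i $ j * (y i \<bullet> y i))
        + (\<Sum>i\<in>UNIV. \<Sum>j\<in>UNIV. \<xi> i * L $ i $ j * (y j \<bullet> y j))
        - 2 * (\<Sum>i\<in>UNIV. \<Sum>j\<in>UNIV. \<xi> i * L $ i $ j * (y i \<bullet> y j))"
    by (simp only: sum.distrib sum_subtractf sum_distrib_left)
  then show ?thesis using diag_i diag_j by simp
qed

lemma pinned_graph_energy_lower_bound:
  fixes w :: "'m::finite \<Rightarrow> 'm \<Rightarrow> real" and p :: 'm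
  assumes w_nonneg: "\<And>i j. w i j \<ge> 0" and \<beta>_pos: "\<beta> > 0"
    and connected: "\<And>I. p \<in> I \<Longrightarrow> I \<noteq> UNIV \<Longrightarrow> \<exists>i\<in>I. \<exists>j. j \<notin> I \<and> w i j > 0"
  shows "\<exists>\<kappa>>0. \<forall>y::'a::euclidean_space^'m. \<kappa> * (\<Sum>i\<in>UNIV. (norm (y $ i))\<^sup>2)
      \<le> (\<Sum>i\<in>UNIV. \<Sum>j\<in>UNIV. w i j * (norm (y $ i - y $ j))\<^sup>2) + \<beta> * (norm (y $ p))\<^sup>2"
proof -
  define S where "S y i = (\<Sum>j\<in>UNIV. w i j * (norm (y $ i - y $ j))\<^sup>2)" for y :: "'a^'m" and i
  define q where "q y = (\<Sum>i\<in>UNIV. S y i) + \<beta> * (norm (y $ p))\<^sup>2" for y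
  have edge_nonneg: "0 \<le> w i j * (norm (y $ i - y $ j))\<^sup>2" for y :: "'a^'m" and i j
    using w_nonneg by simp
  have S_nonneg: "0 \<le> S y i" for y i
    unfolding S_def by (rule sum_nonneg) (rule edge_nonneg)
  have "\<exists>\<kappa>>0. \<forall>y. \<kappa> * (norm y)\<^sup>2 \<le> q y"
  proof (rule homogeneous_pos_lower_bound)
    show "continuous_on UNIV q" unfolding q_def S_def by (intro continuous_intros)
    show "q (r *\<^sub>R y) = r\<^sup>2 * q y" for r y
    proof -
      have "S (r *\<^sub>R y) i = r\<^sup>2 * S y i" for i
        unfolding S_def sum_distrib_left
        by (simp add: scaleR_diff_right[symmetric] power_mult_distrib mult.left_commute
            del: scaleR_diff_right)
      then show ?thesis
        unfolding q_def by (simp add: sum_distrib_left[symmetric] power_mult_distrib distrib_left)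
    qed
    show "q y > 0" if "y \<noteq> 0" for y
    proof (rule ccontr)
      assume "\<not> q y > 0"
      moreover have "0 \<le> (\<Sum>i\<in>UNIV. S y i)" by (rule sum_nonneg) (rule S_nonneg)
      moreover have "0 \<le> \<beta> * (norm (y $ p))\<^sup>2" using \<beta>_pos by simp
      ultimately have "(\<Sum>i\<in>UNIV. S y i) = 0" "\<beta> * (norm (y $ p))\<^sup>2 = 0"
        unfolding q_def by linarith+
      then have "S y i = 0" and "y $ p = 0" for i
        using \<beta>_pos S_nonneg sum_nonneg_eq_0_iff[of UNIV "S y"] by auto
      then have edge_zero: "w i j * (norm (y $ i - y $ j))\<^sup>2 = 0" for i j
        using edge_nonneg sum_nonneg_eq_0_iff[of UNIV "\<lambda>j. w i j * (norm (y $ i - y $ j))\<^sup>2"]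
        unfolding S_def by auto
      have "{i. y $ i = 0} = UNIV"
      proof (rule ccontr)
        assume "{i. y $ i = 0} \<noteq> UNIV"
        then obtain i j where "y $ i = 0" "y $ j \<noteq> 0" "w i j > 0"
          using connected[of "{i. y $ i = 0}"] \<open>y $ p = 0\<close> by auto
        then show False using edge_zero[of i j] by simp
      qed
      then show False using that by (auto simp: vec_eq_iff)
    qed
  qed
  moreover have "(norm y)\<^sup>2 = (\<Sum>i\<in>UNIV. (norm (y $ i))\<^sup>2)" for y :: "'a^'m"
    by (simp add: power2_norm_eq_inner inner_vec_def)
  ultimately show ?thesis unfolding q_def S_def by auto
qed

lemma pinned_coupling_coercive:
  fixes L :: "real^'m^'m" and P :: "real^'n^'n" and B :: "real^'k^'n" and p :: 'm
  assumes L_irr: "irreducible_matrix L"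
    and L_offdiag: "\<And>i j. i \<noteq> j \<Longrightarrow> L $ i $ j \<ge> 0"
    and L_rowsum: "\<And>i. (\<Sum>j\<in>UNIV. L $ i $ j) = 0"
    and \<xi>_pos: "\<And>i. \<xi> i > 0"
    and \<xi>_left: "\<And>j. (\<Sum>i\<in>UNIV. \<xi> i * L $ i $ j) = 0"
    and \<epsilon>_pos: "\<epsilon> > 0" and P_pd: "pos_def_matrix P"
  shows "\<exists>\<kappa>>0. \<forall>e::'m \<Rightarrow> real^'n. \<kappa> * (\<Sum>i\<in>UNIV. (norm (transpose B *v e i))\<^sup>2)
           \<le> - (\<Sum>i\<in>UNIV. \<Sum>j\<in>UNIV. \<xi> i * L $ i $ j * ((transpose B *v e i) \<bullet> (transpose B *v e j)))
             + \<epsilon> * \<xi> p * (e p \<bullet> (P *v e p))"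
proof -
  obtain \<mu> where \<mu>: "\<mu> > 0" "\<And>x. \<mu> * (norm x)\<^sup>2 \<le> x \<bullet> (P *v x)"
    using pos_def_matrix_lower_bound[OF P_pd] by blast
  obtain K where K: "K > 0" "\<And>x. norm (transpose B *v x) \<le> K * norm x"
    using linear_bounded_pos[OF matrix_vector_mul_linear[of "transpose B"]] by blast
  (* The diagonal of L is nonpositive, but diagonal weights only multiply y_i - y_i = 0. *)
  define w where "w i j = (if i = j then 0 else \<xi> i * L $ i $ j / 2)" for i j
  define \<beta> where "\<beta> = \<epsilon> * \<xi> p * \<mu> / K\<^sup>2"
  have "\<exists>\<kappa>>0. \<forall>y::(real^'k)^'m. \<kappa> * (\<Sum>i\<in>UNIV. (norm (y $ i))\<^sup>2)
      \<le> (\<Sum>i\<in>UNIV. \<Sum>j\<in>UNIV. w i j * (norm (y $ i - y $ j))\<^sup>2) + \<beta> * (norm (y $ p))\<^sup>2"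
  proof (rule pinned_graph_energy_lower_bound)
    show "w i j \<ge> 0" for i j unfolding w_def using \<xi>_pos[of i] L_offdiag[of i j] by simp
    show "\<beta> > 0" unfolding \<beta>_def using \<epsilon>_pos \<xi>_pos[of p] \<mu>(1) K(1) by simp
    fix I assume "p \<in> I" "I \<noteq> UNIV"
    then obtain i j where "i \<in> I" "j \<notin> I" "L $ i $ j \<noteq> 0"
      using L_irr unfolding irreducible_matrix_def by blast
    moreover from this have "w i j > 0"
      unfolding w_def using L_offdiag[of i j] \<xi>_pos[of i] by auto
    ultimately show "\<exists>i\<in>I. \<exists>j. j \<notin> I \<and> w i j > 0" by blast
  qed
  then obtain \<kappa> where \<kappa>: "\<kappa> > 0" and energy: "\<And>y::(real^'k)^'m. \<kappa> * (\<Sum>i\<in>UNIV. (norm (y $ i))\<^sup>2)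
      \<le> (\<Sum>i\<in>UNIV. \<Sum>j\<in>UNIV. w i j * (norm (y $ i - y $ j))\<^sup>2) + \<beta> * (norm (y $ p))\<^sup>2"
    by blast
  have "\<kappa> * (\<Sum>i\<in>UNIV. (norm (transpose B *v e i))\<^sup>2)
      \<le> - (\<Sum>i\<in>UNIV. \<Sum>j\<in>UNIV. \<xi> i * L $ i $ j * ((transpose B *v e i) \<bullet> (transpose B *v e j)))
        + \<epsilon> * \<xi> p * (e p \<bullet> (P *v e p))" for e :: "'m \<Rightarrow> real^'n"
  proof -
    define Y where "Y i = transpose B *v e i" for i
    have "(\<Sum>i\<in>UNIV. \<Sum>j\<in>UNIV. w i j * (norm (Y i - Y j))\<^sup>2)
        = (1/2) * (\<Sum>i\<in>UNIV. \<Sum>j\<in>UNIV. \<xi> i * L $ i $ j * (norm (Y i - Y j))\<^sup>2)"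
      unfolding sum_distrib_left by (intro sum.cong refl) (auto simp: w_def)
    also have "\<dots> = - (\<Sum>i\<in>UNIV. \<Sum>j\<in>UNIV. \<xi> i * L $ i $ j * (Y i \<bullet> Y j))"
      using weighted_laplacian_inner_sum[OF L_rowsum \<xi>_left, of Y] by simp
    finally have coupling: "(\<Sum>i\<in>UNIV. \<Sum>j\<in>UNIV. w i j * (norm (Y i - Y j))\<^sup>2)
        = - (\<Sum>i\<in>UNIV. \<Sum>j\<in>UNIV. \<xi> i * L $ i $ j * (Y i \<bullet> Y j))" .
    have "\<beta> * (norm (Y p))\<^sup>2 \<le> \<epsilon> * \<xi> p * \<mu> * (norm (e p))\<^sup>2"
    proof -
      have "(norm (Y p))\<^sup>2 \<le> K\<^sup>2 * (norm (e p))\<^sup>2"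
        unfolding Y_def power_mult_distrib[symmetric] by (rule power_mono[OF K(2)]) simp
      then show ?thesis
        unfolding \<beta>_def using \<epsilon>_pos \<xi>_pos[of p] \<mu>(1) K(1)
        by (simp add: field_simps mult_left_mono)
    qed
    also have "\<dots> \<le> \<epsilon> * \<xi> p * (e p \<bullet> (P *v e p))"
      using \<mu>(2)[of "e p"] \<epsilon>_pos \<xi>_pos[of p] by (simp add: mult.assoc)
    finally have pinning: "\<beta> * (norm (Y p))\<^sup>2 \<le> \<epsilon> * \<xi> p * (e p \<bullet> (P *v e p))" .
    show ?thesis
      using energy[of "\<chi> i. Y i"] coupling pinning unfolding Y_def by simp
  qed
  with \<kappa> show ?thesis by blast
qed

lemma pinned_network_drift_bound:
  fixes e F :: "'m::finite \<Rightarrow> real^'n" and P \<Gamma> :: "real^'n^'n" and B :: "real^'k^'n"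
    and L :: "real^'m^'m"
  assumes P_sym: "transpose P = P" and factor: "P ** \<Gamma> = B ** transpose B"
    and \<xi>_nonneg: "\<And>i. \<xi> i \<ge> 0"
    and node: "\<And>i. e i \<bullet> (P *v F i) \<le> - a * (norm (e i))\<^sup>2 + R * (norm (transpose B *v e i))\<^sup>2"
    and coercive: "\<kappa> * (\<Sum>i\<in>UNIV. (norm (transpose B *v e i))\<^sup>2)
           \<le> - (\<Sum>i\<in>UNIV. \<Sum>j\<in>UNIV. \<xi> i * L $ i $ j * ((transpose B *v e i) \<bullet> (transpose B *v e j)))
             + \<epsilon> * \<xi> p * (e p \<bullet> (P *v e p))"
    and R_nonneg: "R \<ge> 0" and c_nonneg: "c \<ge> 0" and c_large: "(\<Sum>i\<in>UNIV. \<xi> i) * R \<le> c * \<kappa>"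
  shows "(\<Sum>i\<in>UNIV. \<xi> i * (e i \<bullet> (P *v (F i + c *\<^sub>R (\<Sum>j\<in>UNIV. L $ i $ j *\<^sub>R (\<Gamma> *v e j))
           - (if i = p then (c * \<epsilon>) *\<^sub>R e i else 0)))))
         \<le> - a * (\<Sum>i\<in>UNIV. \<xi> i * (norm (e i))\<^sup>2)"
proof -
  define Y where "Y i = transpose B *v e i" for i
  define Q where "Q = (\<Sum>i\<in>UNIV. (norm (Y i))\<^sup>2)"
  have coupling: "e i \<bullet> (P *v (\<Sum>j\<in>UNIV. L $ i $ j *\<^sub>R (\<Gamma> *v e j))) = (\<Sum>j\<in>UNIV. L $ i $ j * (Y i \<bullet> Y j))"
    for i
  proof -
    have "e i \<bullet> (P *v (\<Sum>j\<in>UNIV. L $ i $ j *\<^sub>R (\<Gamma> *v e j)))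
        = (\<Sum>j\<in>UNIV. L $ i $ j *\<^sub>R (\<Gamma> *v e j)) \<bullet> (P *v e i)"
      by (rule symmetric_matrix_inner_commute[OF P_sym])
    also have "\<dots> = (\<Sum>j\<in>UNIV. L $ i $ j * ((\<Gamma> *v e j) \<bullet> (P *v e i)))"
      by (simp add: inner_sum_left)
    also have "\<dots> = (\<Sum>j\<in>UNIV. L $ i $ j * (Y i \<bullet> Y j))"
    proof (rule sum.cong[OF refl])
      fix j
      have "(\<Gamma> *v e j) \<bullet> (P *v e i) = e i \<bullet> ((P ** \<Gamma>) *v e j)"
        by (simp add: symmetric_matrix_inner_commute[OF P_sym] matrix_vector_mul_assoc)
      also have "\<dots> = Y i \<bullet> Y j"
        unfolding factor Y_def by (rule inner_mult_transpose_factor)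
      finally show "L $ i $ j * ((\<Gamma> *v e j) \<bullet> (P *v e i)) = L $ i $ j * (Y i \<bullet> Y j)" by simp
    qed
    finally show ?thesis .
  qed
  have "(\<Sum>i\<in>UNIV. \<xi> i * (e i \<bullet> (P *v (F i + c *\<^sub>R (\<Sum>j\<in>UNIV. L $ i $ j *\<^sub>R (\<Gamma> *v e j))
           - (if i = p then (c * \<epsilon>) *\<^sub>R e i else 0)))))
      = (\<Sum>i\<in>UNIV. \<xi> i * (e i \<bullet> (P *v F i)))
        + c * (\<Sum>i\<in>UNIV. \<Sum>j\<in>UNIV. \<xi> i * L $ i $ j * (Y i \<bullet> Y j))
        - c * \<epsilon> * \<xi> p * (e p \<bullet> (P *v e p))"
    by (simp add: matrix_vector_right_distrib matrix_vector_mult_diff_distrib matrix_vector_mult_scaleR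
        inner_add_right inner_diff_right coupling algebra_simps sum.distrib sum_subtractf
        sum_distrib_left if_distrib[of "\<lambda>v. e _ \<bullet> (P *v v)"] if_distrib[of "times (\<xi> _)"]
        cong: if_cong)
  also have "\<dots> \<le> (\<Sum>i\<in>UNIV. \<xi> i * (- a * (norm (e i))\<^sup>2 + R * (norm (Y i))\<^sup>2)) - c * \<kappa> * Q"
  proof -
    have "(\<Sum>i\<in>UNIV. \<xi> i * (e i \<bullet> (P *v F i)))
        \<le> (\<Sum>i\<in>UNIV. \<xi> i * (- a * (norm (e i))\<^sup>2 + R * (norm (Y i))\<^sup>2))"
      unfolding Y_def by (intro sum_mono mult_left_mono node \<xi>_nonneg)
    moreover have "c * (\<kappa> * Q) \<le> c * (- (\<Sum>i\<in>UNIV. \<Sum>j\<in>UNIV. \<xi> i * L $ i $ j * (Y i \<bullet> Y j))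
        + \<epsilon> * \<xi> p * (e p \<bullet> (P *v e p)))"
      using coercive c_nonneg unfolding Q_def Y_def by (intro mult_left_mono)
    ultimately show ?thesis by (simp add: algebra_simps)
  qed
  also have "\<dots> \<le> - a * (\<Sum>i\<in>UNIV. \<xi> i * (norm (e i))\<^sup>2)"
  proof -
    have "(\<Sum>i\<in>UNIV. \<xi> i * (R * (norm (Y i))\<^sup>2)) \<le> (\<Sum>i\<in>UNIV. (\<Sum>k\<in>UNIV. \<xi> k) * (R * (norm (Y i))\<^sup>2))"
      using \<xi>_nonneg R_nonneg
      by (intro sum_mono mult_right_mono member_le_sum) auto
    also have "\<dots> = (\<Sum>k\<in>UNIV. \<xi> k) * R * Q"
      unfolding Q_def by (simp add: sum_distrib_left mult.assoc)
    also have "\<dots> \<le> c * \<kappa> * Q"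
      unfolding Q_def using c_large by (intro mult_right_mono sum_nonneg) auto
    moreover have "(\<Sum>i\<in>UNIV. \<xi> i * (- a * (norm (e i))\<^sup>2 + R * (norm (Y i))\<^sup>2))
        = - a * (\<Sum>i\<in>UNIV. \<xi> i * (norm (e i))\<^sup>2) + (\<Sum>i\<in>UNIV. \<xi> i * (R * (norm (Y i))\<^sup>2))"
      unfolding distrib_left sum.distrib sum_distrib_left by (simp add: mult_ac)
    ultimately show ?thesis by linarith
  qed
  finally show ?thesis .
qed

lemma has_real_derivative_quadratic_form:
  fixes e :: "real \<Rightarrow> real^'n" and P :: "real^'n^'n"
  assumes P_sym: "transpose P = P" and e: "(e has_vector_derivative d) (at t within S)"
  shows "((\<lambda>\<tau>. e \<tau> \<bullet> (P *v e \<tau>)) has_real_derivative 2 * (e t \<bullet> (P *v d))) (at t within S)"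
proof -
  have "((\<lambda>\<tau>. P *v e \<tau>) has_vector_derivative P *v d) (at t within S)"
    by (rule bounded_linear.has_vector_derivative[OF matrix_vector_mul_bounded_linear e])
  then have "((\<lambda>\<tau>. e \<tau> \<bullet> (P *v e \<tau>)) has_derivative
      (\<lambda>h. e t \<bullet> (h *\<^sub>R (P *v d)) + (h *\<^sub>R d) \<bullet> (P *v e t))) (at t within S)"
    using has_derivative_inner e unfolding has_vector_derivative_def by blast
  moreover have "(\<lambda>h. e t \<bullet> (h *\<^sub>R (P *v d)) + (h *\<^sub>R d) \<bullet> (P *v e t))
      = (\<lambda>h. (2 * (e t \<bullet> (P *v d))) * h)"
    using symmetric_matrix_inner_commute[OF P_sym, of d "e t"] by (auto simp: algebra_simps)
  ultimately show ?thesis by (simp add: has_field_derivative_def)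
qed

lemma differential_inequality_exp_bound:
  fixes V V' :: "real \<Rightarrow> real"
  assumes V: "\<And>t. t \<ge> 0 \<Longrightarrow> (V has_real_derivative V' t) (at t within {0..})"
    and decay: "\<And>t. t \<ge> 0 \<Longrightarrow> V' t \<le> - \<alpha> * V t"
    and "t \<ge> 0"
  shows "V t \<le> V 0 * exp (- \<alpha> * t)"
proof -
  define h where "h \<tau> = - (V \<tau> * exp (\<alpha> * \<tau>))" for \<tau>
  have h: "(h has_real_derivative - (V' \<tau> + \<alpha> * V \<tau>) * exp (\<alpha> * \<tau>)) (at \<tau> within {0..})"
    if "\<tau> \<ge> 0" for \<tau>
    unfolding h_def using V[OF that] by (auto intro!: derivative_eq_intros simp: algebra_simps)
  have "h 0 \<le> h t"
  proof (rule DERIV_nonneg_imp_increasing_open[OF \<open>t \<ge> 0\<close>])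
    fix \<tau> :: real assume \<tau>: "0 < \<tau>" "\<tau> < t"
    have "at \<tau> within {0..} = at \<tau>" by (rule at_within_interior) (use \<tau> in auto)
    then have "(h has_real_derivative - (V' \<tau> + \<alpha> * V \<tau>) * exp (\<alpha> * \<tau>)) (at \<tau>)"
      using h[of \<tau>] \<tau> by simp
    moreover have "- (V' \<tau> + \<alpha> * V \<tau>) * exp (\<alpha> * \<tau>) \<ge> 0"
      using decay[of \<tau>] \<tau> by (intro mult_nonneg_nonneg) auto
    ultimately show "\<exists>y. (h has_real_derivative y) (at \<tau>) \<and> 0 \<le> y" by blast
  next
    have "continuous_on {0..} h" by (rule DERIV_continuous_on[OF h]) auto
    then show "continuous_on {0..t} h" by (rule continuous_on_subset) auto
  qed
  then have "V t * exp (\<alpha> * t) * exp (- \<alpha> * t) \<le> V 0 * exp (- \<alpha> * t)"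
    unfolding h_def by (intro mult_right_mono) auto
  then show ?thesis by (simp add: mult.assoc exp_add[symmetric])
qed

lemma tendsto_zero_of_norm_sq_exp_bound:
  fixes g :: "real \<Rightarrow> 'a::real_normed_vector"
  assumes "\<alpha> > 0" and bound: "\<And>t. t \<ge> 0 \<Longrightarrow> (norm (g t))\<^sup>2 \<le> C * exp (- \<alpha> * t)"
  shows "(g \<longlongrightarrow> 0) at_top"
proof -
  have "filterlim (\<lambda>t. - \<alpha> * t) at_bot at_top"
    by (rule filterlim_tendsto_neg_mult_at_bot[OF tendsto_const _ filterlim_ident])
      (use \<open>\<alpha> > 0\<close> in simp)
  then have "((\<lambda>t. C * exp (- \<alpha> * t)) \<longlongrightarrow> 0) at_top"
    by (intro tendsto_mult_right_zero filterlim_compose[OF exp_at_bot])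
  moreover have "\<forall>\<^sub>F t in at_top. norm ((norm (g t))\<^sup>2) \<le> C * exp (- \<alpha> * t)"
    using eventually_ge_at_top[of 0] by eventually_elim (use bound in auto)
  ultimately have "((\<lambda>t. (norm (g t))\<^sup>2) \<longlongrightarrow> 0) at_top"
    by (rule Lim_null_comparison[rotated])
  then have "((\<lambda>t. sqrt ((norm (g t))\<^sup>2)) \<longlongrightarrow> 0) at_top"
    using tendsto_real_sqrt by fastforce
  then show ?thesis by (simp add: tendsto_norm_zero_iff)
qed

lemma weighted_quadratic_lyapunov_tendsto_zero:
  fixes e d :: "'m::finite \<Rightarrow> real \<Rightarrow> real^'n" and P :: "real^'n^'n"
  assumes P_pd: "pos_def_matrix P" and \<xi>_pos: "\<And>i. \<xi> i > 0" and "a > 0"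
    and e: "\<And>i t. t \<ge> 0 \<Longrightarrow> (e i has_vector_derivative d i t) (at t within {0..})"
    and dissipative: "\<And>t. t \<ge> 0 \<Longrightarrow>
      (\<Sum>i\<in>UNIV. \<xi> i * (e i t \<bullet> (P *v d i t))) \<le> - a * (\<Sum>i\<in>UNIV. \<xi> i * (norm (e i t))\<^sup>2)"
  shows "(e i \<longlongrightarrow> 0) at_top"
proof -
  obtain \<mu> where \<mu>: "\<mu> > 0" "\<And>x. \<mu> * (norm x)\<^sup>2 \<le> x \<bullet> (P *v x)"
    using pos_def_matrix_lower_bound[OF P_pd] by blast
  obtain K where K: "K > 0" "\<And>x. x \<bullet> (P *v x) \<le> K * (norm x)\<^sup>2"
    using matrix_quadratic_form_upper_bound by blast
  define V where "V t = (\<Sum>i\<in>UNIV. \<xi> i * (e i t \<bullet> (P *v e i t)))" for t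
  have V_deriv: "(V has_real_derivative (\<Sum>i\<in>UNIV. \<xi> i * (2 * (e i t \<bullet> (P *v d i t)))))
      (at t within {0..})" if "t \<ge> 0" for t
    using P_pd unfolding V_def pos_def_matrix_def
    by (intro DERIV_sum DERIV_cmult has_real_derivative_quadratic_form e that) simp
  have "V t \<le> V 0 * exp (- (2 * a / K) * t)" if "t \<ge> 0" for t
  proof (rule differential_inequality_exp_bound[OF V_deriv _ that])
    fix t :: real assume "t \<ge> 0"
    have "V t \<le> K * (\<Sum>i\<in>UNIV. \<xi> i * (norm (e i t))\<^sup>2)"
      unfolding V_def sum_distrib_left
      by (intro sum_mono) (metis K(2) \<xi>_pos less_imp_le mult.left_commute mult_left_mono)
    then have "- (2 * a / K) * V t \<ge> - 2 * a * (\<Sum>i\<in>UNIV. \<xi> i * (norm (e i t))\<^sup>2)"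
      using K(1) \<open>a > 0\<close> by (simp add: field_simps)
    moreover have "(\<Sum>i\<in>UNIV. \<xi> i * (2 * (e i t \<bullet> (P *v d i t))))
        = 2 * (\<Sum>i\<in>UNIV. \<xi> i * (e i t \<bullet> (P *v d i t)))"
      by (simp add: sum_distrib_left mult_ac)
    ultimately show "(\<Sum>i\<in>UNIV. \<xi> i * (2 * (e i t \<bullet> (P *v d i t)))) \<le> - (2 * a / K) * V t"
      using dissipative[OF \<open>t \<ge> 0\<close>] by linarith
  qed
  moreover have "\<xi> i * \<mu> * (norm (e i t))\<^sup>2 \<le> V t" for t
  proof -
    have "\<xi> i * \<mu> * (norm (e i t))\<^sup>2 \<le> \<xi> i * (e i t \<bullet> (P *v e i t))"
      using \<mu>(2) \<xi>_pos[of i] by (simp add: mult.assoc)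
    also have "\<dots> \<le> V t"
      unfolding V_def
      by (intro member_le_sum mult_nonneg_nonneg less_imp_le[OF \<xi>_pos]
          order_trans[OF _ \<mu>(2)]) (use \<mu>(1) in auto)
    finally show ?thesis .
  qed
  ultimately have bound: "(norm (e i t))\<^sup>2 \<le> V 0 / (\<xi> i * \<mu>) * exp (- (2 * a / K) * t)"
    if "t \<ge> 0" for t
    using that \<xi>_pos[of i] \<mu>(1) by (fastforce simp: field_simps intro: order_trans)
  show ?thesis
    by (rule tendsto_zero_of_norm_sq_exp_bound[OF _ bound]) (use \<open>a > 0\<close> K(1) in simp)
qed

lemma pinned_error_has_vector_derivative:
  fixes x :: "real \<Rightarrow> 'm::finite \<Rightarrow> real^'n" and L :: "real^'m^'m" and \<Gamma> :: "real^'n^'n"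
  assumes L_rowsum: "(\<Sum>k\<in>UNIV. L $ j $ k) = 0"
    and x: "((\<lambda>\<tau>. x \<tau> j) has_vector_derivative f (x t j)
        + c *\<^sub>R (\<Sum>k\<in>UNIV. L $ j $ k *\<^sub>R (\<Gamma> *v x t k))
        - (if j = p then (c * \<epsilon>) *\<^sub>R (x t j - s t) else 0)) (at t within S)"
    and s: "(s has_vector_derivative f (s t)) (at t within S)"
  shows "((\<lambda>\<tau>. x \<tau> j - s \<tau>) has_vector_derivative (f (x t j) - f (s t))
        + c *\<^sub>R (\<Sum>k\<in>UNIV. L $ j $ k *\<^sub>R (\<Gamma> *v (x t k - s t)))
        - (if j = p then (c * \<epsilon>) *\<^sub>R (x t j - s t) else 0)) (at t within S)"
proof -
  have "(\<Sum>k\<in>UNIV. L $ j $ k *\<^sub>R (\<Gamma> *v (x t k - s t)))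
      = (\<Sum>k\<in>UNIV. L $ j $ k *\<^sub>R (\<Gamma> *v x t k)) - (\<Sum>k\<in>UNIV. L $ j $ k) *\<^sub>R (\<Gamma> *v s t)"
    by (simp add: matrix_vector_mult_diff_distrib scaleR_diff_right sum_subtractf scaleR_sum_left)
  then have rhs_eq: "(f (x t j) - f (s t)) + c *\<^sub>R (\<Sum>k\<in>UNIV. L $ j $ k *\<^sub>R (\<Gamma> *v (x t k - s t)))
        - (if j = p then (c * \<epsilon>) *\<^sub>R (x t j - s t) else 0)
      = (f (x t j) + c *\<^sub>R (\<Sum>k\<in>UNIV. L $ j $ k *\<^sub>R (\<Gamma> *v x t k))
        - (if j = p then (c * \<epsilon>) *\<^sub>R (x t j - s t) else 0)) - f (s t)"
    using L_rowsum by (simp add: algebra_simps)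
  show ?thesis
    unfolding rhs_eq by (rule has_vector_derivative_diff[OF x s])
qed

theorem proposition3:
  fixes f :: "real^'n \<Rightarrow> real^'n"
    and \<Gamma> P \<Delta> :: "real^'n^'n"
    and s :: "real \<Rightarrow> real^'n"
    and L :: "real^'m^'m"
    and p :: 'm
    and \<epsilon> eps :: real
  assumes f_cont: "continuous_on UNIV f"
    and s_sol: "\<And>t. t \<ge> 0 \<Longrightarrow> (s has_vector_derivative f (s t)) (at t within {0..})"
    and L_irr: "irreducible_matrix L"
    and L_rank: "rank L = CARD('m) - 1"
    and L_offdiag: "\<And>i j. i \<noteq> j \<Longrightarrow> L $ i $ j \<ge> 0"
    and L_rowsum: "\<And>i. (\<Sum>j\<in>UNIV. L $ i $ j) = 0"
    and \<epsilon>_pos: "\<epsilon> > 0"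
    and P_pd: "pos_def_matrix P"
    and eps_pos: "eps > 0"
    and QUAD: "\<And>x y. (x - y) \<bullet> (P *v ((f x - f y) - \<Delta> *v (x - y))) \<le> - eps * ((x - y) \<bullet> (x - y))"
    and ran_eq: "Ran (P ** \<Delta>) = Ran (P ** \<Gamma>)"
    and B_fact: "\<exists>B :: real^'k^'n. P ** \<Gamma> = B ** transpose B"
    and PG_pd_ran: "\<And>u. u \<in> Ran (P ** \<Gamma>) \<Longrightarrow> u \<noteq> 0 \<Longrightarrow> u \<bullet> ((P ** \<Gamma>) *v u) > 0"
  shows "\<exists>c0. \<forall>c > c0. \<forall>x :: real \<Rightarrow> 'm \<Rightarrow> real^'n.
           (\<forall>i. \<forall>t\<ge>0. ((\<lambda>\<tau>. x \<tau> i) has_vector_derivative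
               (f (x t i) + c *\<^sub>R (\<Sum>j\<in>UNIV. L $ i $ j *\<^sub>R (\<Gamma> *v x t j))
                - (if i = p then (c * \<epsilon>) *\<^sub>R (x t i - s t) else 0))) (at t within {0..}))
           \<longrightarrow> (\<forall>i. ((\<lambda>t. x t i - s t) \<longlongrightarrow> 0) at_top)"
proof -
  obtain \<xi> where \<xi>_pos: "\<And>i. \<xi> i > 0" and \<xi>_left: "\<And>j. (\<Sum>i\<in>UNIV. \<xi> i * L $ i $ j) = 0"
    using irreducible_laplacian_pos_left_kernel[OF L_irr L_offdiag L_rowsum] by blast
  obtain B :: "real^'k^'n" where factor: "P ** \<Gamma> = B ** transpose B"
    using B_fact by blast
  obtain R where "R \<ge> 0" and node: "\<And>x y. (x - y) \<bullet> (P *v (f x - f y))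
      \<le> - (eps / 2) * (norm (x - y))\<^sup>2 + R * (norm (transpose B *v (x - y)))\<^sup>2"
    using quad_condition_factor_bound[OF QUAD eps_pos] ran_eq factor by (metis order_refl)
  obtain \<kappa> where "\<kappa> > 0" and coercive: "\<And>e. \<kappa> * (\<Sum>i\<in>UNIV. (norm (transpose B *v e i))\<^sup>2)
      \<le> - (\<Sum>i\<in>UNIV. \<Sum>j\<in>UNIV. \<xi> i * L $ i $ j * ((transpose B *v e i) \<bullet> (transpose B *v e j)))
        + \<epsilon> * \<xi> p * (e p \<bullet> (P *v e p))"
    using pinned_coupling_coercive[OF L_irr L_offdiag L_rowsum \<xi>_pos \<xi>_left \<epsilon>_pos P_pd] by blast
  define c0 where "c0 = (\<Sum>i\<in>UNIV. \<xi> i) * R / \<kappa>"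
  have c0_nonneg: "c0 \<ge> 0"
    unfolding c0_def using \<open>R \<ge> 0\<close> \<open>\<kappa> > 0\<close> \<xi>_pos by (simp add: sum_nonneg less_imp_le)
  have P_sym: "transpose P = P" using P_pd by (simp add: pos_def_matrix_def)
  have "((\<lambda>t. x t i - s t) \<longlongrightarrow> 0) at_top" if "c > c0" and ode: "\<forall>i. \<forall>t\<ge>0. ((\<lambda>\<tau>. x \<tau> i) has_vector_derivative
       (f (x t i) + c *\<^sub>R (\<Sum>j\<in>UNIV. L $ i $ j *\<^sub>R (\<Gamma> *v x t j))
        - (if i = p then (c * \<epsilon>) *\<^sub>R (x t i - s t) else 0))) (at t within {0..})"
    for c and x :: "real \<Rightarrow> 'm \<Rightarrow> real^'n" and i
  proof -
    define d where "d j t = (f (x t j) - f (s t)) + c *\<^sub>R (\<Sum>k\<in>UNIV. L $ j $ k *\<^sub>R (\<Gamma> *v (x t k - s t)))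
        - (if j = p then (c * \<epsilon>) *\<^sub>R (x t j - s t) else 0)" for j t
    have "((\<lambda>t. x t j - s t) has_vector_derivative d j t) (at t within {0..})" if "t \<ge> 0" for j t
      unfolding d_def
      by (rule pinned_error_has_vector_derivative[OF L_rowsum ode[rule_format, OF that] s_sol[OF that]])
    moreover have "(\<Sum>j\<in>UNIV. \<xi> j * ((x t j - s t) \<bullet> (P *v d j t)))
        \<le> - (eps / 2) * (\<Sum>j\<in>UNIV. \<xi> j * (norm (x t j - s t))\<^sup>2)" for t
      unfolding d_def
    proof (rule pinned_network_drift_bound[OF P_sym factor less_imp_le[OF \<xi>_pos] node coercive \<open>R \<ge> 0\<close>])
      show "c \<ge> 0" using \<open>c > c0\<close> c0_nonneg by simp
      have "(\<Sum>i\<in>UNIV. \<xi> i) * R < c * \<kappa>"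
        using \<open>c > c0\<close> \<open>\<kappa> > 0\<close> by (simp add: c0_def pos_divide_less_eq)
      then show "(\<Sum>i\<in>UNIV. \<xi> i) * R \<le> c * \<kappa>" by simp
    qed
    ultimately show ?thesis
      using weighted_quadratic_lyapunov_tendsto_zero[OF P_pd, where \<xi> = \<xi> and a = "eps / 2"
          and e = "\<lambda>j t. x t j - s t" and d = d] \<xi>_pos eps_pos by simp
  qed
  then show ?thesis by blast
qed

end
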